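(* Let ${\tt G}$ be a digraph, $P\subseteq SSG({\tt G})$ a downward closed (or upward closed) sub-poset, $\mathbf A$ an additive category and $\mathcal F\colon\mathbf P\to\mathbf A$ a covariant functor. Then the cochain complex $(C^*_{\mathcal F}(P),d^* )$ does not depend, up to isomorphism of cochain complexes, on the choice of the sign assignment on $P$ used to define it.
   Context: A digraph ${\tt G}=(V,E)$ has finite $V$ and $E\subseteq(V\times V)\setminus\{(v,v)\}$. $SSG({\tt G})$ is the poset of spanning subgraphs (all vertices, any subset of edges) ordered by inclusion of edge sets; in it ${\tt H}\prec{\tt H}'$ (covering) iff ${\tt H}'$ has exactly one more edge. A sub-poset $P$ is downward closed if $h\le h'\in P$ implies $h\in P$, upward closed if $P\ni h'\le h$ implies $h\in P$. A sign assignment on $P$ assigns $\epsilon({\tt H},{\tt H}')\in\mathbb Z_2$ to each covering pair in $P$ so that around every square ${\tt H}\prec{\tt H}_1,{\tt H}_2\prec{\tt H}''$ ($ {\tt H}_1\neq{\tt H}_2$) one has $\epsilon({\tt H},{\tt H}_1)+\epsilon({\tt H}_1,{\tt H}'')\equiv\epsilon({\tt H},{\tt H}_2)+\epsilon({\tt H}_2,{\tt H}'')+1\pmod 2$. $\mathbf P$ is the category with objects the elements of $P$ and a unique morphism ${\tt H}\to{\tt H}'$ iff ${\tt H}\le{\tt H}'$. Given a sign assignment $\epsilon$, $C^n_{\mathcal F}(P)=\bigoplus_{{\tt H}\in P,\ \ell({\tt H})=n}\mathcal F({\tt H})$ with $\ell({\tt H})=\#E({\tt H})-\min_{{\tt H}'\in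 P}\#E({\tt H}')$ and $d^n=\sum_{{\tt H}\prec{\tt H}'\text{ in }P,\ \ell({\tt H})=n}(-1)^{\epsilon({\tt H},{\tt H}')}\mathcal F({\tt H}\prec{\tt H}')$. *)

theory Defs
  imports Main
begin

(* A digraph G = (V,E): finite V, E a set of ordered pairs without loops.
   A spanning subgraph is identified with its edge set H \<subseteq> E, so SSG(G) = Pow E
   ordered by inclusion. *)
definition digraph :: "'v set \<Rightarrow> ('v \<times> 'v) set \<Rightarrow> bool" where
  "digraph V E \<longleftrightarrow> finite V \<and> E \<subseteq> (V \<times> V) - {(v, v) | v. True}"

definition covers :: "'a set \<Rightarrow> 'a set \<Rightarrow> bool" where
  "covers H H' \<longleftrightarrow> H \<subseteq> H' \<and> card (H' - H) = 1"

definition down_closed :: "'a set \<Rightarrow> 'a set set \<Rightarrow> bool" where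
  "down_closed E P \<longleftrightarrow> P \<subseteq> Pow E \<and> (\<forall>H H'. H \<subseteq> H' \<and> H' \<in> P \<longrightarrow> H \<in> P)"

definition up_closed :: "'a set \<Rightarrow> 'a set set \<Rightarrow> bool" where
  "up_closed E P \<longleftrightarrow> P \<subseteq> Pow E \<and> (\<forall>H H'. H' \<in> P \<and> H' \<subseteq> H \<and> H \<subseteq> E \<longrightarrow> H \<in> P)"

(* Sign assignment with values in Z_2 = bool (addition = exclusive or) *)
definition sign_assignment :: "'a set set \<Rightarrow> ('a set \<Rightarrow> 'a set \<Rightarrow> bool) \<Rightarrow> bool" where
  "sign_assignment P eps \<longleftrightarrow>
     (\<forall>H H1 H2 H''. H \<in> P \<and> H1 \<in> P \<and> H2 \<in> P \<and> H'' \<in> P \<and>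
        covers H H1 \<and> covers H H2 \<and> covers H1 H'' \<and> covers H2 H'' \<and> H1 \<noteq> H2 \<longrightarrow>
        ((eps H H1 \<noteq> eps H1 H'') \<longleftrightarrow> \<not> (eps H H2 \<noteq> eps H2 H'')))"

definition additive_category ::
  "'o set \<Rightarrow> ('o \<Rightarrow> 'o \<Rightarrow> 'm set) \<Rightarrow> ('m \<Rightarrow> 'm \<Rightarrow> 'm) \<Rightarrow> ('o \<Rightarrow> 'm)
   \<Rightarrow> ('o \<Rightarrow> 'o \<Rightarrow> 'm) \<Rightarrow> ('m \<Rightarrow> 'm \<Rightarrow> 'm) \<Rightarrow> ('m \<Rightarrow> 'm) \<Rightarrow> bool" where
  "additive_category Ob Hom cmp idn zer add neg \<longleftrightarrow>
     (\<forall>X Y Z f g. X \<in> Ob \<and> Y \<in> Ob \<and> Z \<in> Ob \<and> f \<in> Hom X Y \<and> g \<in> Hom Y Z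
        \<longrightarrow> cmp g f \<in> Hom X Z)
   \<and> (\<forall>W X Y Z f g h. W \<in> Ob \<and> X \<in> Ob \<and> Y \<in> Ob \<and> Z \<in> Ob \<and>
        f \<in> Hom W X \<and> g \<in> Hom X Y \<and> h \<in> Hom Y Z
        \<longrightarrow> cmp h (cmp g f) = cmp (cmp h g) f)
   \<and> (\<forall>X. X \<in> Ob \<longrightarrow> idn X \<in> Hom X X)
   \<and> (\<forall>X Y f. X \<in> Ob \<and> Y \<in> Ob \<and> f \<in> Hom X Y \<longrightarrow> cmp f (idn X) = f \<and> cmp (idn Y) f = f)
   \<and> (\<forall>X Y. X \<in> Ob \<and> Y \<in> Ob \<longrightarrow>
        zer X Y \<in> Hom X Y
      \<and> (\<forall>f\<in>Hom X Y. \<forall>g\<in>Hom X Y. add f g \<in> Hom X Y \<and> add f g = add g f)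
      \<and> (\<forall>f\<in>Hom X Y. \<forall>g\<in>Hom X Y. \<forall>h\<in>Hom X Y. add (add f g) h = add f (add g h))
      \<and> (\<forall>f\<in>Hom X Y. add f (zer X Y) = f \<and> neg f \<in> Hom X Y \<and> add f (neg f) = zer X Y))
   \<and> (\<forall>X Y Z. X \<in> Ob \<and> Y \<in> Ob \<and> Z \<in> Ob \<longrightarrow>
        (\<forall>f\<in>Hom X Y. \<forall>f'\<in>Hom X Y. \<forall>g\<in>Hom Y Z. \<forall>g'\<in>Hom Y Z.
           cmp g (add f f') = add (cmp g f) (cmp g f') \<and>
           cmp (add g g') f = add (cmp g f) (cmp g' f)))
   \<and> (\<exists>Z\<in>Ob. \<forall>X\<in>Ob. Hom Z X = {zer Z X} \<and> Hom X Z = {zer X Z})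
   \<and> (\<forall>X Y. X \<in> Ob \<and> Y \<in> Ob \<longrightarrow>
        (\<exists>S\<in>Ob. \<exists>i1\<in>Hom X S. \<exists>i2\<in>Hom Y S. \<exists>p1\<in>Hom S X. \<exists>p2\<in>Hom S Y.
           cmp p1 i1 = idn X \<and> cmp p2 i2 = idn Y \<and>
           cmp p2 i1 = zer X Y \<and> cmp p1 i2 = zer Y X \<and>
           add (cmp i1 p1) (cmp i2 p2) = idn S))"

(* Covariant functor from the poset category of P (unique morphism H \<rightarrow> H' iff H \<subseteq> H')
   to the category; Fm H H' is the image of the morphism H \<rightarrow> H'. *)
definition functor_on ::
  "'a set set \<Rightarrow> 'o set \<Rightarrow> ('o \<Rightarrow> 'o \<Rightarrow> 'm set) \<Rightarrow> ('m \<Rightarrow> 'm \<Rightarrow> 'm) \<Rightarrow> ('o \<Rightarrow> 'm)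
   \<Rightarrow> ('a set \<Rightarrow> 'o) \<Rightarrow> ('a set \<Rightarrow> 'a set \<Rightarrow> 'm) \<Rightarrow> bool" where
  "functor_on P Ob Hom cmp idn Fo Fm \<longleftrightarrow>
     (\<forall>H\<in>P. Fo H \<in> Ob \<and> Fm H H = idn (Fo H))
   \<and> (\<forall>H\<in>P. \<forall>H'\<in>P. H \<subseteq> H' \<longrightarrow> Fm H H' \<in> Hom (Fo H) (Fo H'))
   \<and> (\<forall>H\<in>P. \<forall>H'\<in>P. \<forall>H''\<in>P. H \<subseteq> H' \<and> H' \<subseteq> H'' \<longrightarrow> Fm H H'' = cmp (Fm H' H'') (Fm H H'))"

definition lev :: "'a set set \<Rightarrow> 'a set \<Rightarrow> nat" where
  "lev P H = card H - Min (card ` P)"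

definition deg :: "'a set set \<Rightarrow> nat \<Rightarrow> 'a set set" where
  "deg P n = {H \<in> P. lev P H = n}"

definition msum :: "('m \<Rightarrow> 'm \<Rightarrow> 'm) \<Rightarrow> 'm \<Rightarrow> 'b set \<Rightarrow> ('b \<Rightarrow> 'm) \<Rightarrow> 'm" where
  "msum add z A f = Finite_Set.fold (\<lambda>x acc. add (f x) acc) z A"

(* Morphisms between finite direct sums \<Oplus>_{H \<in> deg P n} F(H) are represented by their matrices
   M H' H \<in> Hom (F H) (F H'). Composition of matrices through the degree-m summand: *)
definition mcomp ::
  "('m \<Rightarrow> 'm \<Rightarrow> 'm) \<Rightarrow> ('m \<Rightarrow> 'm \<Rightarrow> 'm) \<Rightarrow> ('o \<Rightarrow> 'o \<Rightarrow> 'm) \<Rightarrow> ('a set \<Rightarrow> 'o)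
   \<Rightarrow> 'a set set \<Rightarrow> nat \<Rightarrow> ('a set \<Rightarrow> 'a set \<Rightarrow> 'm) \<Rightarrow> ('a set \<Rightarrow> 'a set \<Rightarrow> 'm)
   \<Rightarrow> 'a set \<Rightarrow> 'a set \<Rightarrow> 'm" where
  "mcomp cmp add zer Fo P m N M = (\<lambda>H'' H.
     msum add (zer (Fo H) (Fo H'')) (deg P m) (\<lambda>H'. cmp (N H'' H') (M H' H)))"

definition idm :: "('o \<Rightarrow> 'm) \<Rightarrow> ('o \<Rightarrow> 'o \<Rightarrow> 'm) \<Rightarrow> ('a set \<Rightarrow> 'o) \<Rightarrow> 'a set \<Rightarrow> 'a set \<Rightarrow> 'm" where
  "idm idn zer Fo = (\<lambda>H' H. if H' = H then idn (Fo H) else zer (Fo H) (Fo H'))"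

definition diffm ::
  "('m \<Rightarrow> 'm) \<Rightarrow> ('o \<Rightarrow> 'o \<Rightarrow> 'm) \<Rightarrow> ('a set \<Rightarrow> 'o) \<Rightarrow> ('a set \<Rightarrow> 'a set \<Rightarrow> 'm)
   \<Rightarrow> ('a set \<Rightarrow> 'a set \<Rightarrow> bool) \<Rightarrow> 'a set \<Rightarrow> 'a set \<Rightarrow> 'm" where
  "diffm neg zer Fo Fm eps = (\<lambda>H' H.
     if covers H H' then (if eps H H' then neg (Fm H H') else Fm H H')
     else zer (Fo H) (Fo H'))"

end

theory Submission
  imports Defs
begin

text \<open>
  The two differentials differ only in the signs of their entries, and the difference
  \<open>c = \<epsilon> + \<epsilon>'\<close> of two sign assignments sums to zero around every square, i.e. it is a
  \<open>\<int>\<^sub>2\<close>-valued 1-cocycle on the Hasse diagram of \<open>P\<close>. If \<open>P\<close> is downward closed, summing \<open>c\<close>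
  along a chosen maximal chain below \<open>H\<close> gives \<open>h(H)\<close> with \<open>c(H,H') = h(H) + h(H')\<close>: the
  square condition makes the sum independent of the chain, by induction on \<open>#H\<close>. An upward
  closed \<open>P\<close> is turned into a downward closed one by taking complements in \<open>E\<close>. The diagonal
  matrix with entries \<open>(-1)\<^bsup>h(H)\<^esup> id\<close> is then an involutive isomorphism of cochain complexes
  from the \<open>\<epsilon>\<close>-complex to the \<open>\<epsilon>'\<close>-complex.
\<close>

locale additive_cat =
  fixes Ob :: "'a set" and Hom :: "'a \<Rightarrow> 'a \<Rightarrow> 'b set" and cmp :: "'b \<Rightarrow> 'b \<Rightarrow> 'b"
    and idn :: "'a \<Rightarrow> 'b" and zer :: "'a \<Rightarrow> 'a \<Rightarrow> 'b" and add :: "'b \<Rightarrow> 'b \<Rightarrow> 'b"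
    and neg :: "'b \<Rightarrow> 'b"
  assumes additive: "additive_category Ob Hom cmp idn zer add neg"
begin

lemma
  shows comp_closed:
    "X \<in> Ob \<Longrightarrow> Y \<in> Ob \<Longrightarrow> Z \<in> Ob \<Longrightarrow> f \<in> Hom X Y \<Longrightarrow> g \<in> Hom Y Z \<Longrightarrow> cmp g f \<in> Hom X Z"
  and id_closed: "X \<in> Ob \<Longrightarrow> idn X \<in> Hom X X"
  and comp_id_right: "X \<in> Ob \<Longrightarrow> Y \<in> Ob \<Longrightarrow> f \<in> Hom X Y \<Longrightarrow> cmp f (idn X) = f"
  and comp_id_left: "X \<in> Ob \<Longrightarrow> Y \<in> Ob \<Longrightarrow> f \<in> Hom X Y \<Longrightarrow> cmp (idn Y) f = f"
  and zero_closed: "X \<in> Ob \<Longrightarrow> Y \<in> Ob \<Longrightarrow> zer X Y \<in> Hom X Y"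
  and add_closed: "X \<in> Ob \<Longrightarrow> Y \<in> Ob \<Longrightarrow> f \<in> Hom X Y \<Longrightarrow> g \<in> Hom X Y \<Longrightarrow> add f g \<in> Hom X Y"
  and add_commute: "X \<in> Ob \<Longrightarrow> Y \<in> Ob \<Longrightarrow> f \<in> Hom X Y \<Longrightarrow> g \<in> Hom X Y \<Longrightarrow> add f g = add g f"
  and add_zero_right: "X \<in> Ob \<Longrightarrow> Y \<in> Ob \<Longrightarrow> f \<in> Hom X Y \<Longrightarrow> add f (zer X Y) = f"
  and neg_closed: "X \<in> Ob \<Longrightarrow> Y \<in> Ob \<Longrightarrow> f \<in> Hom X Y \<Longrightarrow> neg f \<in> Hom X Y"
  and add_neg_right: "X \<in> Ob \<Longrightarrow> Y \<in> Ob \<Longrightarrow> f \<in> Hom X Y \<Longrightarrow> add f (neg f) = zer X Y"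
  and comp_add_right:
    "X \<in> Ob \<Longrightarrow> Y \<in> Ob \<Longrightarrow> Z \<in> Ob \<Longrightarrow> f \<in> Hom X Y \<Longrightarrow> f' \<in> Hom X Y \<Longrightarrow> g \<in> Hom Y Z \<Longrightarrow>
      cmp g (add f f') = add (cmp g f) (cmp g f')"
  and comp_add_left:
    "X \<in> Ob \<Longrightarrow> Y \<in> Ob \<Longrightarrow> Z \<in> Ob \<Longrightarrow> f \<in> Hom X Y \<Longrightarrow> g \<in> Hom Y Z \<Longrightarrow> g' \<in> Hom Y Z \<Longrightarrow>
      cmp (add g g') f = add (cmp g f) (cmp g' f)"
  by (insert additive, unfold additive_category_def, simp_all)

lemma add_assoc:
  "X \<in> Ob \<Longrightarrow> Y \<in> Ob \<Longrightarrow> f \<in> Hom X Y \<Longrightarrow> g \<in> Hom X Y \<Longrightarrow> h \<in> Hom X Y \<Longrightarrow>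
    add (add f g) h = add f (add g h)"
  using additive[unfolded additive_category_def, THEN conjunct2, THEN conjunct2, THEN conjunct2,
      THEN conjunct2, THEN conjunct1]
  by blast

lemma add_idem_zero:
  assumes "X \<in> Ob" "Y \<in> Ob" "x \<in> Hom X Y" "add x x = x"
  shows "x = zer X Y"
proof -
  have "x = add x (add x (neg x))"
    using assms by (simp add: add_neg_right add_zero_right)
  also have "\<dots> = add (add x x) (neg x)"
    using assms(1-3) by (simp add: add_assoc neg_closed)
  also have "\<dots> = zer X Y"
    using assms by (simp add: add_neg_right)
  finally show ?thesis .
qed

lemma comp_zero_right:
  assumes "X \<in> Ob" "Y \<in> Ob" "Z \<in> Ob" "g \<in> Hom Y Z"
  shows "cmp g (zer X Y) = zer X Z"
proof (rule add_idem_zero)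
  show "add (cmp g (zer X Y)) (cmp g (zer X Y)) = cmp g (zer X Y)"
    using assms comp_add_right[of X Y Z "zer X Y" "zer X Y" g] by (simp add: zero_closed add_zero_right)
qed (use assms comp_closed zero_closed in auto)

lemma comp_zero_left:
  assumes "X \<in> Ob" "Y \<in> Ob" "Z \<in> Ob" "f \<in> Hom X Y"
  shows "cmp (zer Y Z) f = zer X Z"
proof (rule add_idem_zero)
  show "add (cmp (zer Y Z) f) (cmp (zer Y Z) f) = cmp (zer Y Z) f"
    using assms comp_add_left[of X Y Z f "zer Y Z" "zer Y Z"] by (simp add: zero_closed add_zero_right)
qed (use assms comp_closed zero_closed in auto)

lemma neg_unique:
  assumes "X \<in> Ob" "Y \<in> Ob" "a \<in> Hom X Y" "b \<in> Hom X Y" "add a b = zer X Y"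
  shows "b = neg a"
proof -
  have "b = add b (add a (neg a))"
    using assms by (simp add: add_neg_right add_zero_right)
  also have "\<dots> = add (add a b) (neg a)"
    using assms neg_closed add_assoc add_commute by metis
  also have "\<dots> = neg a"
    using assms neg_closed add_commute add_zero_right zero_closed by metis
  finally show ?thesis .
qed

lemma neg_neg: "X \<in> Ob \<Longrightarrow> Y \<in> Ob \<Longrightarrow> a \<in> Hom X Y \<Longrightarrow> neg (neg a) = a"
  using neg_unique[of X Y "neg a" a] neg_closed add_neg_right add_commute by metis

lemma comp_neg_right:
  assumes "X \<in> Ob" "Y \<in> Ob" "Z \<in> Ob" "f \<in> Hom X Y" "g \<in> Hom Y Z"
  shows "cmp g (neg f) = neg (cmp g f)"
proof -
  have "add (cmp g f) (cmp g (neg f)) = cmp g (add f (neg f))"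
    using assms comp_add_right neg_closed by metis
  also have "\<dots> = zer X Z"
    using assms add_neg_right comp_zero_right by metis
  finally show ?thesis
    using neg_unique assms comp_closed neg_closed by metis
qed

lemma comp_neg_left:
  assumes "X \<in> Ob" "Y \<in> Ob" "Z \<in> Ob" "f \<in> Hom X Y" "g \<in> Hom Y Z"
  shows "cmp (neg g) f = neg (cmp g f)"
proof -
  have "add (cmp g f) (cmp (neg g) f) = cmp (add g (neg g)) f"
    using assms comp_add_left neg_closed by metis
  also have "\<dots> = zer X Z"
    using assms add_neg_right comp_zero_left by metis
  finally show ?thesis
    using neg_unique assms comp_closed neg_closed by metis
qed

lemma msum_insert:
  assumes "X \<in> Ob" "Y \<in> Ob" "finite A" "x \<notin> A" "\<forall>a\<in>insert x A. f a \<in> Hom X Y"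
  shows "msum add (zer X Y) (insert x A) f = add (f x) (msum add (zer X Y) A f)"
proof -
  \<comment> \<open>\<open>add\<close> commutes only on hom-sets, so fold with a step that forces its argument into \<open>Hom X Y\<close>\<close>
  define step where "step a acc = add (f a) (if acc \<in> Hom X Y then acc else zer X Y)" for a acc
  have step_closed: "step a acc \<in> Hom X Y" if "a \<in> insert x A" for a acc
    using that assms by (auto simp: step_def add_closed zero_closed)
  interpret step: comp_fun_commute_on "insert x A" step
  proof
    fix a b assume ab: "a \<in> insert x A" "b \<in> insert x A"
    show "step b \<circ> step a = step a \<circ> step b"
    proof
      fix acc
      define t where "t = (if acc \<in> Hom X Y then acc else zer X Y)"
      have "t \<in> Hom X Y" "f a \<in> Hom X Y" "f b \<in> Hom X Y"
        using ab assms by (auto simp: t_def zero_closed)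
      then have "add (f b) (add (f a) t) = add (f a) (add (f b) t)"
        using assms(1,2) add_assoc add_commute by metis
      then show "(step b \<circ> step a) acc = (step a \<circ> step b) acc"
        using step_closed ab by (simp add: step_def t_def)
    qed
  qed
  have msum_eq: "msum add (zer X Y) B f = Finite_Set.fold step (zer X Y) B" if "B \<subseteq> insert x A" for B
    unfolding msum_def
    by (rule fold_closed_eq[where B = "Hom X Y"]) (use that assms in \<open>auto simp: step_def add_closed zero_closed\<close>)
  have fold_closed: "Finite_Set.fold step (zer X Y) B \<in> Hom X Y" if "B \<subseteq> insert x A" for B
  proof -
    have "finite B"
      using that assms(3) finite_subset by auto
    then show ?thesis
      using that
    proof (induction B rule: finite_induct)
      case empty
      then show ?case by (simp add: zero_closed assms)
    next
      case (insert b B)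
      then show ?case using step_closed by simp
    qed
  qed
  show ?thesis
    using fold_closed[OF subset_insertI] msum_eq[OF subset_insertI] msum_eq[OF subset_refl] assms(3,4)
    by (simp add: step_def)
qed

lemma msum_zero:
  assumes "X \<in> Ob" "Y \<in> Ob" "finite A" "\<forall>a\<in>A. f a = zer X Y"
  shows "msum add (zer X Y) A f = zer X Y"
  using assms(3,4)
proof (induction A rule: finite_induct)
  case empty
  then show ?case by (simp add: msum_def)
next
  case (insert b B)
  then show ?case using msum_insert[of X Y B b f] assms(1,2) by (simp add: zero_closed add_zero_right)
qed

lemma msum_single:
  assumes "X \<in> Ob" "Y \<in> Ob" "finite A" "a \<in> A" "f a \<in> Hom X Y" "\<forall>b\<in>A - {a}. f b = zer X Y"
  shows "msum add (zer X Y) A f = f a"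
proof -
  have "\<forall>b\<in>insert a (A - {a}). f b \<in> Hom X Y"
    using assms zero_closed by (metis Diff_iff insertE singletonD)
  then have "msum add (zer X Y) (insert a (A - {a})) f = f a"
    using msum_insert[of X Y "A - {a}" a f] msum_zero[of X Y "A - {a}" f] assms
    by (simp add: add_zero_right)
  then show ?thesis
    using \<open>a \<in> A\<close> by (simp add: insert_absorb)
qed

definition sign_id :: "bool \<Rightarrow> 'a \<Rightarrow> 'b" where
  "sign_id b X = (if b then neg (idn X) else idn X)"

lemma sign_id_closed: "X \<in> Ob \<Longrightarrow> sign_id b X \<in> Hom X X"
  unfolding sign_id_def by (simp add: id_closed neg_closed)

lemma comp_sign_id_left:
  "X \<in> Ob \<Longrightarrow> Y \<in> Ob \<Longrightarrow> u \<in> Hom X Y \<Longrightarrow> cmp (sign_id b Y) u = (if b then neg u else u)"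
  unfolding sign_id_def using comp_neg_left[of X Y Y u "idn Y"] by (simp add: id_closed comp_id_left)

lemma comp_sign_id_right:
  "X \<in> Ob \<Longrightarrow> Y \<in> Ob \<Longrightarrow> u \<in> Hom X Y \<Longrightarrow> cmp u (sign_id b X) = (if b then neg u else u)"
  unfolding sign_id_def using comp_neg_right[of X X Y "idn X" u] by (simp add: id_closed comp_id_right)

lemma sign_id_involutive: "X \<in> Ob \<Longrightarrow> cmp (sign_id b X) (sign_id b X) = idn X"
  using comp_sign_id_left[OF _ _ sign_id_closed] neg_neg[OF _ _ id_closed]
  by (simp add: sign_id_def)

end

lemma digraph_finite_edges: "digraph V E \<Longrightarrow> finite E"
  unfolding digraph_def by (meson Diff_subset finite_SigmaI finite_subset subset_trans)

definition cocycle :: "'a set set \<Rightarrow> ('a set \<Rightarrow> 'a set \<Rightarrow> bool) \<Rightarrow> bool" where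
  "cocycle P c \<longleftrightarrow>
     (\<forall>H H1 H2 H''. H \<in> P \<and> H1 \<in> P \<and> H2 \<in> P \<and> H'' \<in> P \<and>
        covers H H1 \<and> covers H H2 \<and> covers H1 H'' \<and> covers H2 H'' \<and> H1 \<noteq> H2 \<longrightarrow>
        (c H H1 \<noteq> c H1 H'') = (c H H2 \<noteq> c H2 H''))"

definition is_coboundary :: "'a set set \<Rightarrow> ('a set \<Rightarrow> bool) \<Rightarrow> ('a set \<Rightarrow> 'a set \<Rightarrow> bool) \<Rightarrow> bool" where
  "is_coboundary P h c \<longleftrightarrow> (\<forall>H\<in>P. \<forall>H'\<in>P. covers H H' \<longrightarrow> c H H' = (h H \<noteq> h H'))"

lemma sign_assignments_differ_by_cocycle:
  assumes "sign_assignment P eps" "sign_assignment P eps'"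
  shows "cocycle P (\<lambda>H H'. eps H H' \<noteq> eps' H H')"
  unfolding cocycle_def
proof (intro allI impI)
  fix H H1 H2 H''
  assume square: "H \<in> P \<and> H1 \<in> P \<and> H2 \<in> P \<and> H'' \<in> P \<and>
    covers H H1 \<and> covers H H2 \<and> covers H1 H'' \<and> covers H2 H'' \<and> H1 \<noteq> H2"
  have "(eps H H1 \<noteq> eps H1 H'') = (\<not> (eps H H2 \<noteq> eps H2 H''))"
    using assms(1) square unfolding sign_assignment_def by blast
  moreover have "(eps' H H1 \<noteq> eps' H1 H'') = (\<not> (eps' H H2 \<noteq> eps' H2 H''))"
    using assms(2) square unfolding sign_assignment_def by blast
  ultimately show "((eps H H1 \<noteq> eps' H H1) \<noteq> (eps H1 H'' \<noteq> eps' H1 H'')) =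
      ((eps H H2 \<noteq> eps' H H2) \<noteq> (eps H2 H'' \<noteq> eps' H2 H''))"
    by argo
qed

lemma covers_insert: "x \<notin> H \<Longrightarrow> covers H (insert x H)"
  unfolding covers_def by (auto simp: insert_Diff_if)

lemma covers_Diff_singleton: "x \<in> H \<Longrightarrow> covers (H - {x}) H"
  using covers_insert[of x "H - {x}"] by (simp add: insert_absorb)

lemma coversE:
  assumes "covers H H'"
  obtains e where "e \<notin> H" "H' = insert e H"
proof -
  obtain e where "H' - H = {e}"
    using assms card_1_singletonE unfolding covers_def by blast
  then show ?thesis
    using that assms unfolding covers_def by blast
qed

lemma covers_complement:
  assumes "A \<subseteq> E" "B \<subseteq> E"
  shows "covers (E - B) (E - A) \<longleftrightarrow> covers A B"
proof -
  have "E - A - (E - B) = B - A" "E - B \<subseteq> E - A \<longleftrightarrow> A \<subseteq> B"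
    using assms by auto
  then show ?thesis
    unfolding covers_def by simp
qed

function chain_potential :: "('a set \<Rightarrow> 'a set \<Rightarrow> bool) \<Rightarrow> 'a set \<Rightarrow> bool" where
  "chain_potential c H =
     (if finite H \<and> H \<noteq> {}
      then chain_potential c (H - {SOME e. e \<in> H}) \<noteq> c (H - {SOME e. e \<in> H}) H
      else False)"
  by auto
termination
  by (relation "measure (\<lambda>(c, H). card H)") (auto simp: some_in_eq card_gt_0_iff)

declare chain_potential.simps [simp del]

lemma cocycle_deletion_square:
  assumes "cocycle P c" "H \<in> P" "H - {a} \<in> P" "H - {b} \<in> P" "H - {a} - {b} \<in> P"
    and "a \<in> H" "b \<in> H" "a \<noteq> b"
  shows "(c (H - {a} - {b}) (H - {a}) \<noteq> c (H - {a}) H) = (c (H - {a} - {b}) (H - {b}) \<noteq> c (H - {b}) H)"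
proof -
  have swap: "H - {b} - {a} = H - {a} - {b}"
    by auto
  have "covers (H - {a} - {b}) (H - {a})" "covers (H - {a} - {b}) (H - {b})"
    "covers (H - {a}) H" "covers (H - {b}) H" "H - {a} \<noteq> H - {b}"
    using covers_Diff_singleton[of b "H - {a}"] covers_Diff_singleton[of a "H - {b}"]
      covers_Diff_singleton[of a H] covers_Diff_singleton[of b H] assms(6-8)
    by (auto simp: swap)
  then show ?thesis
    using assms(1-5) unfolding cocycle_def by blast
qed

lemma chain_potential_Diff_singleton:
  assumes fin: "\<forall>H\<in>P. finite H" and del: "\<forall>H\<in>P. \<forall>e\<in>H. H - {e} \<in> P" and "cocycle P c"
    and "H \<in> P" "e \<in> H"
  shows "chain_potential c H = (chain_potential c (H - {e}) \<noteq> c (H - {e}) H)"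
  using assms(4,5)
proof (induction "card H" arbitrary: H e rule: less_induct)
  case less
  define a where "a = (SOME e. e \<in> H)"
  have "finite H" "a \<in> H"
    using less.prems fin by (auto simp: a_def some_in_eq)
  then have "card H > 0"
    by (auto simp: card_gt_0_iff)
  have step: "chain_potential c H = (chain_potential c (H - {a}) \<noteq> c (H - {a}) H)"
    using chain_potential.simps[of c H] \<open>finite H\<close> \<open>a \<in> H\<close> by (auto simp: a_def)
  show ?case
  proof (cases "e = a")
    case True
    then show ?thesis using step by simp
  next
    case False
    \<comment> \<open>both chains pass through \<open>H - {a} - {e}\<close>, where the square condition reconciles them\<close>
    have swap: "H - {e} - {a} = H - {a} - {e}"
      by auto
    have in_P: "H - {a} \<in> P" "H - {e} \<in> P" "H - {a} - {e} \<in> P"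
      using del less.prems \<open>a \<in> H\<close> False by auto
    have "chain_potential c (H - {a}) =
        (chain_potential c (H - {a} - {e}) \<noteq> c (H - {a} - {e}) (H - {a}))"
      using less.hyps[of "H - {a}" e] in_P less.prems False \<open>a \<in> H\<close> \<open>card H > 0\<close> by simp
    moreover have "chain_potential c (H - {e}) =
        (chain_potential c (H - {a} - {e}) \<noteq> c (H - {a} - {e}) (H - {e}))"
      using less.hyps[of "H - {e}" a] in_P less.prems False \<open>a \<in> H\<close> \<open>card H > 0\<close>
      by (simp add: swap)
    moreover have "(c (H - {a} - {e}) (H - {a}) \<noteq> c (H - {a}) H) =
        (c (H - {a} - {e}) (H - {e}) \<noteq> c (H - {e}) H)"
      using cocycle_deletion_square[OF \<open>cocycle P c\<close>] less.prems in_P \<open>a \<in> H\<close> False by blast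
    ultimately show ?thesis
      using step by argo
  qed
qed

lemma deletion_closed_cocycle_is_coboundary:
  assumes "\<forall>H\<in>P. finite H" "\<forall>H\<in>P. \<forall>e\<in>H. H - {e} \<in> P" "cocycle P c"
  shows "is_coboundary P (chain_potential c) c"
  unfolding is_coboundary_def
proof (intro ballI impI)
  fix H H' assume "H \<in> P" "H' \<in> P" "covers H H'"
  then obtain e where "e \<notin> H" "H' = insert e H"
    by (blast elim: coversE)
  then have "H' - {e} = H" "e \<in> H'"
    by auto
  then have "chain_potential c H' = (chain_potential c H \<noteq> c H H')"
    using chain_potential_Diff_singleton[OF assms \<open>H' \<in> P\<close>] by metis
  then show "c H H' = (chain_potential c H \<noteq> chain_potential c H')"
    by auto
qed

lemma cocycle_complement:
  assumes "cocycle P c" "P \<subseteq> Pow E"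
  shows "cocycle ((\<lambda>H. E - H) ` P) (\<lambda>A B. c (E - B) (E - A))"
  unfolding cocycle_def
proof (intro allI impI)
  fix A A1 A2 A''
  assume "A \<in> (\<lambda>H. E - H) ` P \<and> A1 \<in> (\<lambda>H. E - H) ` P \<and> A2 \<in> (\<lambda>H. E - H) ` P \<and>
    A'' \<in> (\<lambda>H. E - H) ` P \<and> covers A A1 \<and> covers A A2 \<and> covers A1 A'' \<and> covers A2 A'' \<and> A1 \<noteq> A2"
  then obtain H H1 H2 H'' where
    "H \<in> P" "H1 \<in> P" "H2 \<in> P" "H'' \<in> P" "A = E - H" "A1 = E - H1" "A2 = E - H2" "A'' = E - H''"
    and "covers A A1" "covers A A2" "covers A1 A''" "covers A2 A''" "A1 \<noteq> A2"
    by blast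
  moreover from this have "H \<subseteq> E" "H1 \<subseteq> E" "H2 \<subseteq> E" "H'' \<subseteq> E"
    using assms(2) by auto
  ultimately have "covers H'' H1" "covers H'' H2" "covers H1 H" "covers H2 H" "H1 \<noteq> H2"
    using covers_complement[of H1 E H] covers_complement[of H2 E H]
      covers_complement[of H'' E H1] covers_complement[of H'' E H2]
    by auto
  then have "(c H'' H1 \<noteq> c H1 H) = (c H'' H2 \<noteq> c H2 H)"
    using assms(1) \<open>H \<in> P\<close> \<open>H1 \<in> P\<close> \<open>H2 \<in> P\<close> \<open>H'' \<in> P\<close> unfolding cocycle_def by blast
  then show "(c (E - A1) (E - A) \<noteq> c (E - A'') (E - A1)) = (c (E - A2) (E - A) \<noteq> c (E - A'') (E - A2))"
    using \<open>A = E - H\<close> \<open>A1 = E - H1\<close> \<open>A2 = E - H2\<close> \<open>A'' = E - H''\<close>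
      \<open>H \<subseteq> E\<close> \<open>H1 \<subseteq> E\<close> \<open>H2 \<subseteq> E\<close> \<open>H'' \<subseteq> E\<close>
    by (simp add: double_diff) argo
qed

lemma is_coboundary_complement:
  assumes "P \<subseteq> Pow E" "is_coboundary ((\<lambda>H. E - H) ` P) h (\<lambda>A B. c (E - B) (E - A))"
  shows "is_coboundary P (\<lambda>H. h (E - H)) c"
  unfolding is_coboundary_def
proof (intro ballI impI)
  fix H H' assume "H \<in> P" "H' \<in> P" "covers H H'"
  moreover from this have "H \<subseteq> E" "H' \<subseteq> E"
    using assms(1) by auto
  ultimately have "E - H \<in> (\<lambda>H. E - H) ` P" "E - H' \<in> (\<lambda>H. E - H) ` P" "covers (E - H') (E - H)"
    using covers_complement[of H E H'] by auto
  then have "c (E - (E - H)) (E - (E - H')) = (h (E - H') \<noteq> h (E - H))"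
    using assms(2) unfolding is_coboundary_def by blast
  then show "c H H' = (h (E - H) \<noteq> h (E - H'))"
    using \<open>H \<subseteq> E\<close> \<open>H' \<subseteq> E\<close> by (auto simp: double_diff)
qed

lemma up_closed_complement_deletion_closed:
  assumes "up_closed E P" "A \<in> (\<lambda>H. E - H) ` P" "e \<in> A"
  shows "A - {e} \<in> (\<lambda>H. E - H) ` P"
proof -
  obtain H where "H \<in> P" "A = E - H"
    using assms(2) by blast
  then have "K \<in> P" if "H \<subseteq> K" "K \<subseteq> E" for K
    using assms(1) that unfolding up_closed_def by blast
  moreover have "H \<subseteq> E"
    using assms(1) \<open>H \<in> P\<close> unfolding up_closed_def by blast
  ultimately have "insert e H \<in> P"
    using assms(3) \<open>A = E - H\<close> by blast
  moreover have "A - {e} = E - insert e H"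
    using \<open>A = E - H\<close> by auto
  ultimately show ?thesis
    by blast
qed

lemma cocycle_is_coboundary:
  assumes "finite E" "down_closed E P \<or> up_closed E P" "cocycle P c"
  shows "\<exists>h. is_coboundary P h c"
proof -
  have "P \<subseteq> Pow E"
    using assms(2) unfolding down_closed_def up_closed_def by auto
  then have finite_members: "\<forall>H\<in>P. finite H"
    using assms(1) finite_subset by (metis PowD subsetD)
  consider "down_closed E P" | "up_closed E P"
    using assms(2) by blast
  then show ?thesis
  proof cases
    case 1
    then have "\<forall>H\<in>P. \<forall>e\<in>H. H - {e} \<in> P"
      unfolding down_closed_def by (meson Diff_subset)
    then have "is_coboundary P (chain_potential c) c"
      by (rule deletion_closed_cocycle_is_coboundary[OF finite_members _ assms(3)])
    then show ?thesis by blast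
  next
    case 2
    let ?Q = "(\<lambda>H. E - H) ` P" and ?c = "\<lambda>A B. c (E - B) (E - A)"
    have "\<forall>A\<in>?Q. finite A"
      using assms(1) by auto
    moreover have "\<forall>A\<in>?Q. \<forall>e\<in>A. A - {e} \<in> ?Q"
      by (intro ballI up_closed_complement_deletion_closed[OF 2])
    ultimately have "is_coboundary ?Q (chain_potential ?c) ?c"
      by (rule deletion_closed_cocycle_is_coboundary[OF _ _ cocycle_complement[OF assms(3) \<open>P \<subseteq> Pow E\<close>]])
    then have "is_coboundary P (\<lambda>H. chain_potential ?c (E - H)) c"
      by (rule is_coboundary_complement[OF \<open>P \<subseteq> Pow E\<close>])
    then show ?thesis by blast
  qed
qed

definition diagm :: "('o \<Rightarrow> 'o \<Rightarrow> 'm) \<Rightarrow> ('a set \<Rightarrow> 'o) \<Rightarrow> ('a set \<Rightarrow> 'm) \<Rightarrow> 'a set \<Rightarrow> 'a set \<Rightarrow> 'm" where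
  "diagm zer Fo D = (\<lambda>H' H. if H' = H then D H else zer (Fo H) (Fo H'))"

locale poset_functor = additive_cat +
  fixes P :: "'e set set" and Fo and Fm
  assumes functorial: "functor_on P Ob Hom cmp idn Fo Fm"
    and finite_P: "finite P"
begin

lemma obj_closed: "H \<in> P \<Longrightarrow> Fo H \<in> Ob"
  using functorial[unfolded functor_on_def, THEN conjunct1] by blast

lemma map_closed: "H \<in> P \<Longrightarrow> H' \<in> P \<Longrightarrow> H \<subseteq> H' \<Longrightarrow> Fm H H' \<in> Hom (Fo H) (Fo H')"
  using functorial[unfolded functor_on_def, THEN conjunct2, THEN conjunct1] by blast

lemma deg_subset: "deg P n \<subseteq> P"
  unfolding deg_def by blast

lemma finite_deg: "finite (deg P n)"
  using finite_P deg_subset by (rule finite_subset[rotated])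

lemma diffm_closed: "H \<in> P \<Longrightarrow> H' \<in> P \<Longrightarrow> diffm neg zer Fo Fm eps H' H \<in> Hom (Fo H) (Fo H')"
  unfolding diffm_def covers_def by (auto simp: obj_closed map_closed neg_closed zero_closed)

lemma mcomp_diagm_right:
  assumes "H \<in> deg P m" "H'' \<in> P" "\<forall>K\<in>deg P m. N H'' K \<in> Hom (Fo K) (Fo H'')"
    and "D H \<in> Hom (Fo H) (Fo H)"
  shows "mcomp cmp add zer Fo P m N (diagm zer Fo D) H'' H = cmp (N H'' H) (D H)"
proof -
  have objs: "Fo H \<in> Ob" "Fo H'' \<in> Ob" "\<forall>K\<in>deg P m. Fo K \<in> Ob"
    using assms(1,2) deg_subset obj_closed by auto
  have "msum add (zer (Fo H) (Fo H'')) (deg P m) (\<lambda>K. cmp (N H'' K) (diagm zer Fo D K H)) =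
      cmp (N H'' H) (diagm zer Fo D H H)"
  proof (rule msum_single[OF objs(1,2) finite_deg assms(1)])
    show "cmp (N H'' H) (diagm zer Fo D H H) \<in> Hom (Fo H) (Fo H'')"
      using comp_closed[of "Fo H" "Fo H" "Fo H''" "D H" "N H'' H"] objs assms by (simp add: diagm_def)
    show "\<forall>K\<in>deg P m - {H}. cmp (N H'' K) (diagm zer Fo D K H) = zer (Fo H) (Fo H'')"
      using objs assms(3) by (simp add: diagm_def comp_zero_right)
  qed
  then show ?thesis
    by (simp add: mcomp_def diagm_def)
qed

lemma mcomp_diagm_left:
  assumes "H'' \<in> deg P m" "H \<in> P" "\<forall>K\<in>deg P m. M K H \<in> Hom (Fo H) (Fo K)"
    and "D H'' \<in> Hom (Fo H'') (Fo H'')"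
  shows "mcomp cmp add zer Fo P m (diagm zer Fo D) M H'' H = cmp (D H'') (M H'' H)"
proof -
  have objs: "Fo H \<in> Ob" "Fo H'' \<in> Ob" "\<forall>K\<in>deg P m. Fo K \<in> Ob"
    using assms(1,2) deg_subset obj_closed by auto
  have "msum add (zer (Fo H) (Fo H'')) (deg P m) (\<lambda>K. cmp (diagm zer Fo D H'' K) (M K H)) =
      cmp (diagm zer Fo D H'' H'') (M H'' H)"
  proof (rule msum_single[OF objs(1,2) finite_deg assms(1)])
    show "cmp (diagm zer Fo D H'' H'') (M H'' H) \<in> Hom (Fo H) (Fo H'')"
      using comp_closed[of "Fo H" "Fo H''" "Fo H''" "M H'' H" "D H''"] objs assms by (simp add: diagm_def)
    show "\<forall>K\<in>deg P m - {H''}. cmp (diagm zer Fo D H'' K) (M K H) = zer (Fo H) (Fo H'')"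
      using objs assms(3) by (auto simp: diagm_def comp_zero_left)
  qed
  then show ?thesis
    by (simp add: mcomp_def diagm_def)
qed

definition sign_diag :: "('e set \<Rightarrow> bool) \<Rightarrow> 'e set \<Rightarrow> 'e set \<Rightarrow> 'b" where
  "sign_diag h = diagm zer Fo (\<lambda>H. sign_id (h H) (Fo H))"

lemma sign_diag_closed: "H \<in> P \<Longrightarrow> H' \<in> P \<Longrightarrow> sign_diag h H' H \<in> Hom (Fo H) (Fo H')"
  unfolding sign_diag_def diagm_def by (auto simp: obj_closed sign_id_closed zero_closed)

lemma sign_diag_involutive:
  assumes "H \<in> deg P n" "H' \<in> deg P n"
  shows "mcomp cmp add zer Fo P n (sign_diag h) (sign_diag h) H' H = idm idn zer Fo H' H"
proof -
  have "H \<in> P" "H' \<in> P"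
    using assms deg_subset by auto
  then have objs: "Fo H \<in> Ob" "Fo H' \<in> Ob"
    by (simp_all add: obj_closed)
  have "\<forall>K\<in>deg P n. sign_diag h H' K \<in> Hom (Fo K) (Fo H')"
    using sign_diag_closed deg_subset \<open>H' \<in> P\<close> by blast
  then have "mcomp cmp add zer Fo P n (sign_diag h) (sign_diag h) H' H =
      cmp (sign_diag h H' H) (sign_id (h H) (Fo H))"
    using mcomp_diagm_right[OF assms(1) \<open>H' \<in> P\<close>, where D = "\<lambda>H. sign_id (h H) (Fo H)"]
      sign_id_closed[OF objs(1)]
    by (simp only: sign_diag_def)
  also have "\<dots> = idm idn zer Fo H' H"
  proof (cases "H' = H")
    case True
    then show ?thesis
      using objs by (simp add: sign_diag_def diagm_def idm_def sign_id_involutive)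
  next
    case False
    then show ?thesis
      using comp_zero_left[OF objs(1,1,2) sign_id_closed[OF objs(1)]]
      by (simp add: sign_diag_def diagm_def idm_def)
  qed
  finally show ?thesis .
qed

lemma diffm_sign_conjugate:
  assumes "is_coboundary P h (\<lambda>H H'. eps H H' \<noteq> eps' H H')" "H \<in> P" "H' \<in> P"
  shows "cmp (diffm neg zer Fo Fm eps' H' H) (sign_id (h H) (Fo H)) =
    cmp (sign_id (h H') (Fo H')) (diffm neg zer Fo Fm eps H' H)"
proof -
  have objs: "Fo H \<in> Ob" "Fo H' \<in> Ob"
    using assms(2,3) by (simp_all add: obj_closed)
  show ?thesis
  proof (cases "covers H H'")
    case True
    then have "(eps H H' \<noteq> eps' H H') = (h H \<noteq> h H')"
      using assms unfolding is_coboundary_def by blast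
    moreover have "Fm H H' \<in> Hom (Fo H) (Fo H')"
      using True assms(2,3) map_closed unfolding covers_def by blast
    ultimately show ?thesis
      using True objs neg_closed neg_neg comp_sign_id_left comp_sign_id_right
      by (cases "h H"; cases "h H'"; cases "eps H H'") (simp_all add: diffm_def)
  next
    case False
    then show ?thesis
      using comp_zero_left[OF objs(1,1,2) sign_id_closed] comp_zero_right[OF objs(1,2,2) sign_id_closed]
        objs
      by (simp add: diffm_def)
  qed
qed

lemma sign_diag_chain_map:
  assumes "is_coboundary P h (\<lambda>H H'. eps H H' \<noteq> eps' H H')" "H \<in> deg P n" "H' \<in> deg P (Suc n)"
  shows "mcomp cmp add zer Fo P n (diffm neg zer Fo Fm eps') (sign_diag h) H' H =
    mcomp cmp add zer Fo P (Suc n) (sign_diag h) (diffm neg zer Fo Fm eps) H' H"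
proof -
  have "H \<in> P" "H' \<in> P"
    using assms(2,3) deg_subset by auto
  then have objs: "Fo H \<in> Ob" "Fo H' \<in> Ob"
    by (simp_all add: obj_closed)
  have "mcomp cmp add zer Fo P n (diffm neg zer Fo Fm eps') (sign_diag h) H' H =
      cmp (diffm neg zer Fo Fm eps' H' H) (sign_id (h H) (Fo H))"
    using mcomp_diagm_right[OF assms(2) \<open>H' \<in> P\<close>, where D = "\<lambda>H. sign_id (h H) (Fo H)"]
      sign_id_closed[OF objs(1)] diffm_closed deg_subset \<open>H' \<in> P\<close>
    by (simp add: subset_iff sign_diag_def)
  also have "\<dots> = cmp (sign_id (h H') (Fo H')) (diffm neg zer Fo Fm eps H' H)"
    using diffm_sign_conjugate[OF assms(1) \<open>H \<in> P\<close> \<open>H' \<in> P\<close>] .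
  also have "\<dots> = mcomp cmp add zer Fo P (Suc n) (sign_diag h) (diffm neg zer Fo Fm eps) H' H"
    using mcomp_diagm_left[OF assms(3) \<open>H \<in> P\<close>, where D = "\<lambda>H. sign_id (h H) (Fo H)"]
      sign_id_closed[OF objs(2)] diffm_closed deg_subset \<open>H \<in> P\<close>
    by (simp add: subset_iff sign_diag_def)
  finally show ?thesis .
qed

end

theorem corollary3p18:
  fixes V :: "'v set" and E :: "('v \<times> 'v) set" and P :: "('v \<times> 'v) set set"
    and Ob :: "'o set" and Hom :: "'o \<Rightarrow> 'o \<Rightarrow> 'm set" and cmp :: "'m \<Rightarrow> 'm \<Rightarrow> 'm"
    and idn :: "'o \<Rightarrow> 'm" and zer :: "'o \<Rightarrow> 'o \<Rightarrow> 'm" and add :: "'m \<Rightarrow> 'm \<Rightarrow> 'm"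
    and neg :: "'m \<Rightarrow> 'm"
    and Fo :: "('v \<times> 'v) set \<Rightarrow> 'o" and Fm :: "('v \<times> 'v) set \<Rightarrow> ('v \<times> 'v) set \<Rightarrow> 'm"
    and eps eps' :: "('v \<times> 'v) set \<Rightarrow> ('v \<times> 'v) set \<Rightarrow> bool"
  assumes "digraph V E"
    and "down_closed E P \<or> up_closed E P"
    and "additive_category Ob Hom cmp idn zer add neg"
    and "functor_on P Ob Hom cmp idn Fo Fm"
    and "sign_assignment P eps"
    and "sign_assignment P eps'"
  shows "\<exists>f g :: nat \<Rightarrow> ('v \<times> 'v) set \<Rightarrow> ('v \<times> 'v) set \<Rightarrow> 'm. \<forall>n.
     (\<forall>H\<in>deg P n. \<forall>H'\<in>deg P n.
        f n H' H \<in> Hom (Fo H) (Fo H') \<and> g n H' H \<in> Hom (Fo H) (Fo H'))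
   \<and> (\<forall>H\<in>deg P n. \<forall>H'\<in>deg P n.
        mcomp cmp add zer Fo P n (g n) (f n) H' H = idm idn zer Fo H' H \<and>
        mcomp cmp add zer Fo P n (f n) (g n) H' H = idm idn zer Fo H' H)
   \<and> (\<forall>H\<in>deg P n. \<forall>H'\<in>deg P (Suc n).
        mcomp cmp add zer Fo P n (diffm neg zer Fo Fm eps') (f n) H' H =
        mcomp cmp add zer Fo P (Suc n) (f (Suc n)) (diffm neg zer Fo Fm eps) H' H)"
proof -
  have "P \<subseteq> Pow E"
    using assms(2) unfolding down_closed_def up_closed_def by auto
  moreover have "finite E"
    using assms(1) by (rule digraph_finite_edges)
  ultimately have "finite P"
    by (meson finite_Pow_iff finite_subset)
  then interpret poset_functor Ob Hom cmp idn zer add neg P Fo Fm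
    using assms(3,4) by unfold_locales
  obtain h where h: "is_coboundary P h (\<lambda>H H'. eps H H' \<noteq> eps' H H')"
    using cocycle_is_coboundary[OF \<open>finite E\<close> assms(2) sign_assignments_differ_by_cocycle[OF assms(5,6)]]
    by blast
  have "sign_diag h H' H \<in> Hom (Fo H) (Fo H')" if "H \<in> deg P n" "H' \<in> deg P n" for n H H'
    using that deg_subset sign_diag_closed by blast
  then show ?thesis
    by (intro exI[of _ "\<lambda>_. sign_diag h"] allI conjI ballI)
      (simp_all add: sign_diag_involutive sign_diag_chain_map[OF h])
qed

end
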